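(* Let $T_0,\dots,T_n$ be second-order rational operators. Then $T_0\to T_1\to\cdots\to T_n$ is an $n$-step rational Darboux transformation if and only if it is a factorization chain.
   Context: $D=d/dz$. An $n$-th order rational operator is $\sum_{k=0}^n p_k(z)D^k$ with rational $p_k$, $p_n\ne0$. $T_0\to\cdots\to T_n$ is an $n$-step rational Darboux transformation if there exist first-order rational operators $A_1,\dots,A_n$ with $A_kT_{k-1}=T_kA_k$ for $k=1,\dots,n$. It is a factorization chain if there exist first-order rational operators $A_k,B_k$ and constants $\lambda_k$ ($k=1,\dots,n$) with $T_{k-1}=B_kA_k+\lambda_k$ and $T_k=A_kB_k+\lambda_k$ for $k=1,\dots,n$. *)

theory Defs
  imports Complex_Main "HOL-Computational_Algebra.Polynomial_Factorial"
    "HOL-Computational_Algebra.Normalized_Fraction" "HOL-Computational_Algebra.Field_as_Ring"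
begin

type_synonym rfun = "complex poly fract"

definition rderiv :: "rfun \<Rightarrow> rfun" where
  "rderiv x = (case quot_of_fract x of (p, q) \<Rightarrow>
      Fract (pderiv p * q - p * pderiv q) (q * q))"

definition rconst :: "complex \<Rightarrow> rfun" where
  "rconst c = to_fract [:c:]"

text \<open>A rational differential operator sum_k p_k(z) D^k is encoded as the polynomial
  (in the formal variable D) with coefficients p_k; its order is the degree.
  Composition of operators uses the Leibniz rule
  (a D^i)(b D^j) = sum_{k<=i} (i choose k) a b^(k) D^(i+j-k).\<close>
type_synonym dop = "rfun poly"

definition dop_comp :: "dop \<Rightarrow> dop \<Rightarrow> dop" where
  "dop_comp A B = (\<Sum>i\<le>degree A. \<Sum>k\<le>i. \<Sum>j\<le>degree B.
      monom (coeff A i * of_nat (i choose k) * (rderiv ^^ k) (coeff B j)) (i + j - k))"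

definition order_op :: "nat \<Rightarrow> dop \<Rightarrow> bool" where
  "order_op m T \<longleftrightarrow> T \<noteq> 0 \<and> degree T = m"

definition rational_darboux_chain :: "nat \<Rightarrow> (nat \<Rightarrow> dop) \<Rightarrow> bool" where
  "rational_darboux_chain n T \<longleftrightarrow>
     (\<exists>A :: nat \<Rightarrow> dop. \<forall>k\<in>{1..n}. order_op 1 (A k) \<and>
        dop_comp (A k) (T (k - 1)) = dop_comp (T k) (A k))"

definition factorization_chain :: "nat \<Rightarrow> (nat \<Rightarrow> dop) \<Rightarrow> bool" where
  "factorization_chain n T \<longleftrightarrow>
     (\<exists>(A :: nat \<Rightarrow> dop) (B :: nat \<Rightarrow> dop) (lam :: nat \<Rightarrow> complex).
        \<forall>k\<in>{1..n}. order_op 1 (A k) \<and> order_op 1 (B k) \<and>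
          T (k - 1) = dop_comp (B k) (A k) + [:rconst (lam k):] \<and>
          T k = dop_comp (A k) (B k) + [:rconst (lam k):])"

end

theory Submission
  imports Defs
begin

text \<open>A first-order operator \<open>A = a\<^sub>1 D + a\<^sub>0\<close> with \<open>a\<^sub>1 \<noteq> 0\<close> divides every second-order
  operator from the right up to a remainder of order zero: \<open>T\<^sub>0 = B A + r\<close>. Moving \<open>A\<close> past the
  multiplication operator \<open>r\<close> gives \<open>A T\<^sub>0 = (A B + r) A + a\<^sub>1 r'\<close>, so if \<open>A T\<^sub>0 = T\<^sub>1 A\<close>, uniqueness
  of right division by \<open>A\<close> forces \<open>T\<^sub>1 = A B + r\<close> and \<open>r' = 0\<close>, i.e. \<open>r\<close> is a constant \<open>\<lambda>\<close>.
  Conversely \<open>A (B A + \<lambda>) = (A B + \<lambda>) A\<close>.\<close>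

lemma rderiv_Fract:
  assumes "q \<noteq> 0"
  shows "rderiv (Fract p q) = Fract (pderiv p * q - p * pderiv q) (q * q)"
proof -
  obtain p' q' where pq': "quot_of_fract (Fract p q) = (p', q')"
    by (cases "quot_of_fract (Fract p q)")
  have "q' \<noteq> 0"
    using snd_quot_of_fract_nonzero[of "Fract p q"] pq' by simp
  moreover have cross: "p' * q = p * q'"
    using Fract_quot_of_fract[of "Fract p q"] pq' \<open>q' \<noteq> 0\<close> assms by (simp add: eq_fract)
  moreover have "pderiv p' * q + p' * pderiv q = pderiv p * q' + p * pderiv q'"
    using arg_cong[OF cross, of pderiv] by (simp add: pderiv_mult algebra_simps)
  ultimately show ?thesis
    unfolding rderiv_def pq' using assms by (simp add: eq_fract) algebra
qed

lemma rderiv_add: "rderiv (x + y) = rderiv x + rderiv y"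
  by (cases x; cases y) (simp add: rderiv_Fract eq_fract pderiv_add pderiv_mult algebra_simps)

lemma rderiv_mult: "rderiv (x * y) = rderiv x * y + x * rderiv y"
  by (cases x; cases y) (simp add: rderiv_Fract eq_fract pderiv_add pderiv_mult algebra_simps)

lemma rderiv_rconst [simp]: "rderiv (rconst c) = 0"
  by (simp add: rconst_def to_fract_def rderiv_Fract Zero_fract_def eq_fract)

lemma rderiv_0 [simp]: "rderiv 0 = 0"
  using rderiv_rconst[of 0] by (simp add: rconst_def)

lemma rderiv_eq_0_imp_rconst:
  assumes "rderiv x = 0"
  obtains c where "x = rconst c"
proof -
  obtain p q where pq: "quot_of_fract x = (p, q)"
    by (cases "quot_of_fract x")
  have "q \<noteq> 0" and "coprime p q" and x: "x = Fract p q"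
    using snd_quot_of_fract_nonzero[of x] coprime_quot_of_fract[of x] Fract_quot_of_fract[of x] pq
    by simp_all
  have wronskian: "pderiv p * q = p * pderiv q"
    using assms \<open>q \<noteq> 0\<close> unfolding rderiv_def pq by (simp add: Zero_fract_def eq_fract)
  then have "q dvd p * pderiv q"
    by (metis dvd_triv_right)
  with \<open>coprime p q\<close> have "q dvd pderiv q"
    by (simp add: coprime_dvd_mult_right_iff coprime_commute)
  then have "pderiv q = 0"
    by (simp add: pderiv_eq_0_iff)
  with wronskian \<open>q \<noteq> 0\<close> have "pderiv p = 0"
    by simp
  with \<open>pderiv q = 0\<close> obtain a b where "p = [:a:]" "q = [:b:]"
    using pderiv_iszero by metis
  with x \<open>q \<noteq> 0\<close> have "x = rconst (a / b)"
    by (simp add: rconst_def to_fract_def eq_fract)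
  then show thesis ..
qed

lemma funpow_rderiv_0 [simp]: "(rderiv ^^ k) 0 = 0"
  by (induction k) simp_all

lemma dop_comp_eq_sum:
  assumes "degree A \<le> m" "degree B \<le> m'"
  shows "dop_comp A B = (\<Sum>i\<le>m. \<Sum>k\<le>i. \<Sum>j\<le>m'.
      monom (coeff A i * of_nat (i choose k) * (rderiv ^^ k) (coeff B j)) (i + j - k))"
proof -
  have "(\<Sum>j\<le>degree B. monom (coeff A i * of_nat (i choose k) * (rderiv ^^ k) (coeff B j)) (i + j - k))
      = (\<Sum>j\<le>m'. monom (coeff A i * of_nat (i choose k) * (rderiv ^^ k) (coeff B j)) (i + j - k))" for i k
    by (rule sum.mono_neutral_left) (use assms(2) in \<open>auto simp: coeff_eq_0\<close>)
  moreover have "(\<Sum>i\<le>degree A. \<Sum>k\<le>i. \<Sum>j\<le>m'. monom (coeff A i * of_nat (i choose k) * (rderiv ^^ k) (coeff B j)) (i + j - k))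
      = (\<Sum>i\<le>m. \<Sum>k\<le>i. \<Sum>j\<le>m'. monom (coeff A i * of_nat (i choose k) * (rderiv ^^ k) (coeff B j)) (i + j - k))"
    by (rule sum.mono_neutral_left) (use assms(1) in \<open>auto simp: coeff_eq_0\<close>)
  ultimately show ?thesis
    unfolding dop_comp_def by simp
qed

lemma dop_comp_linear_linear:
  "dop_comp [:b0, b1:] [:a0, a1:] =
     [:b0 * a0 + b1 * rderiv a0, b0 * a1 + b1 * a0 + b1 * rderiv a1, b1 * a1:]"
  by (simp add: dop_comp_eq_sum[of _ 1 _ 1] atMost_Suc monom_Suc monom_0 algebra_simps)

lemma dop_comp_linear_quadratic:
  "dop_comp [:a0, a1:] [:t0, t1, t2:] =
     [:a0 * t0 + a1 * rderiv t0, a0 * t1 + a1 * t0 + a1 * rderiv t1,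
       a0 * t2 + a1 * t1 + a1 * rderiv t2, a1 * t2:]"
  by (simp add: dop_comp_eq_sum[of _ 1 _ 2] numeral_2_eq_2 atMost_Suc monom_Suc monom_0 algebra_simps)

lemma dop_comp_quadratic_linear:
  "dop_comp [:s0, s1, s2:] [:a0, a1:] =
     [:s0 * a0 + s1 * rderiv a0 + s2 * rderiv (rderiv a0),
       s0 * a1 + s1 * a0 + s1 * rderiv a1 + 2 * s2 * rderiv a0 + s2 * rderiv (rderiv a1),
       s1 * a1 + s2 * a0 + 2 * s2 * rderiv a1, s2 * a1:]"
  by (simp add: dop_comp_eq_sum[of _ 2 _ 1] numeral_2_eq_2 atMost_Suc monom_Suc monom_0 algebra_simps)

lemma order_op_0_iff: "order_op 0 A \<longleftrightarrow> (\<exists>c. c \<noteq> 0 \<and> A = [:c:])"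
  unfolding order_op_def by (metis degree0_coeffs degree_pCons_0 pCons_eq_0_iff)

lemma order_op_Suc_pCons: "order_op (Suc m) (pCons a p) \<longleftrightarrow> order_op m p"
  by (auto simp: order_op_def)

lemma order_op_1_iff: "order_op 1 A \<longleftrightarrow> (\<exists>a0 a1. a1 \<noteq> 0 \<and> A = [:a0, a1:])"
  by (cases A) (metis One_nat_def order_op_Suc_pCons order_op_0_iff)

lemma order_op_2_iff: "order_op 2 A \<longleftrightarrow> (\<exists>a0 a1 a2. a2 \<noteq> 0 \<and> A = [:a0, a1, a2:])"
  by (cases A) (metis Suc_1 order_op_Suc_pCons order_op_1_iff)

text \<open>The defect \<open>a\<^sub>1 r'\<close> is the commutator of \<open>A\<close> with multiplication by \<open>r\<close>.\<close>

lemma dop_comp_linear_factorization_commute: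
  "dop_comp [:a0, a1:] (dop_comp [:b0, b1:] [:a0, a1:] + [:r:]) =
     dop_comp (dop_comp [:a0, a1:] [:b0, b1:] + [:r:]) [:a0, a1:] + [:a1 * rderiv r:]"
  by (simp add: dop_comp_linear_linear dop_comp_linear_quadratic dop_comp_quadratic_linear
      rderiv_add rderiv_mult algebra_simps)

lemma dop_right_divide_linear:
  assumes "a1 \<noteq> 0"
  obtains b0 r where "[:t0, t1, t2:] = dop_comp [:b0, t2 / a1:] [:a0, a1:] + [:r:]"
proof
  define b1 where "b1 = t2 / a1"
  define b0 where "b0 = (t1 - b1 * a0 - b1 * rderiv a1) / a1"
  show "[:t0, t1, t2:] = dop_comp [:b0, t2 / a1:] [:a0, a1:] + [:t0 - b0 * a0 - b1 * rderiv a0:]"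
    using assms by (simp add: dop_comp_linear_linear b0_def b1_def)
qed

lemma dop_comp_linear_right_cancel:
  assumes "a1 \<noteq> 0"
    and eq: "dop_comp [:s0, s1, s2:] [:a0, a1:] = dop_comp [:u0, u1, u2:] [:a0, a1:] + [:c:]"
  shows "[:s0, s1, s2:] = [:u0, u1, u2:]" and "c = 0"
proof -
  have e0: "s0 * a0 + s1 * rderiv a0 + s2 * rderiv (rderiv a0) =
      u0 * a0 + u1 * rderiv a0 + u2 * rderiv (rderiv a0) + c"
    and e1: "s0 * a1 + s1 * a0 + s1 * rderiv a1 + 2 * s2 * rderiv a0 + s2 * rderiv (rderiv a1) =
      u0 * a1 + u1 * a0 + u1 * rderiv a1 + 2 * u2 * rderiv a0 + u2 * rderiv (rderiv a1)"
    and e2: "s1 * a1 + s2 * a0 + 2 * s2 * rderiv a1 = u1 * a1 + u2 * a0 + 2 * u2 * rderiv a1"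
    and e3: "s2 * a1 = u2 * a1"
    using eq by (simp_all add: dop_comp_quadratic_linear)
  have "s2 = u2"
    using e3 assms by simp
  with e2 assms have "s1 = u1"
    by simp
  with e1 \<open>s2 = u2\<close> assms have "s0 = u0"
    by simp
  with e0 \<open>s1 = u1\<close> \<open>s2 = u2\<close> show "c = 0"
    by simp
  from \<open>s0 = u0\<close> \<open>s1 = u1\<close> \<open>s2 = u2\<close> show "[:s0, s1, s2:] = [:u0, u1, u2:]"
    by simp
qed

lemma factorization_intertwines:
  assumes "order_op 1 A" "order_op 1 B"
  shows "dop_comp A (dop_comp B A + [:rconst c:]) = dop_comp (dop_comp A B + [:rconst c:]) A"
proof -
  obtain a0 a1 b0 b1 where "A = [:a0, a1:]" "B = [:b0, b1:]"
    using assms order_op_1_iff by metis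
  then show ?thesis
    using dop_comp_linear_factorization_commute[of a0 a1 b0 b1 "rconst c"] by simp
qed

lemma intertwining_imp_factorization:
  assumes "order_op 1 A" "order_op 2 T0" "order_op 2 T1"
    and intertwines: "dop_comp A T0 = dop_comp T1 A"
  shows "\<exists>B lam. order_op 1 B \<and> T0 = dop_comp B A + [:rconst lam:] \<and> T1 = dop_comp A B + [:rconst lam:]"
proof -
  obtain a0 a1 where "a1 \<noteq> 0" and A: "A = [:a0, a1:]"
    using assms(1) order_op_1_iff by blast
  obtain t0 t1 t2 where "t2 \<noteq> 0" and T0: "T0 = [:t0, t1, t2:]"
    using assms(2) order_op_2_iff by blast
  obtain s0 s1 s2 where T1: "T1 = [:s0, s1, s2:]"
    using assms(3) order_op_2_iff by blast
  obtain b0 r where T0_factor: "T0 = dop_comp [:b0, t2 / a1:] A + [:r:]"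
    using dop_right_divide_linear[OF \<open>a1 \<noteq> 0\<close>] unfolding T0 A by metis
  define B where "B = [:b0, t2 / a1:]"
  have "order_op 1 B"
    using \<open>a1 \<noteq> 0\<close> \<open>t2 \<noteq> 0\<close> order_op_1_iff unfolding B_def by auto
  obtain u0 u1 u2 where U: "dop_comp A B + [:r:] = [:u0, u1, u2:]"
    by (simp add: A B_def dop_comp_linear_linear)
  have "dop_comp T1 A = dop_comp A T0"
    using intertwines ..
  also have "\<dots> = dop_comp (dop_comp A B + [:r:]) A + [:a1 * rderiv r:]"
    unfolding T0_factor A B_def by (rule dop_comp_linear_factorization_commute)
  also have "\<dots> = dop_comp [:u0, u1, u2:] A + [:a1 * rderiv r:]"
    by (simp only: U)
  finally have "T1 = [:u0, u1, u2:]" and "a1 * rderiv r = 0"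
    using dop_comp_linear_right_cancel[OF \<open>a1 \<noteq> 0\<close>] unfolding T1 A by blast+
  moreover obtain lam where "r = rconst lam"
    using \<open>a1 * rderiv r = 0\<close> \<open>a1 \<noteq> 0\<close> rderiv_eq_0_imp_rconst by auto
  ultimately show ?thesis
    using \<open>order_op 1 B\<close> T0_factor U unfolding B_def by metis
qed

theorem mainTheorem2:
  fixes n :: nat and T :: "nat \<Rightarrow> dop"
  assumes "\<forall>k\<le>n. order_op 2 (T k)"
  shows "rational_darboux_chain n T \<longleftrightarrow> factorization_chain n T"
proof
  assume "rational_darboux_chain n T"
  then obtain A where A: "\<forall>k\<in>{1..n}. order_op 1 (A k) \<and> dop_comp (A k) (T (k - 1)) = dop_comp (T k) (A k)"
    unfolding rational_darboux_chain_def by blast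
  have "\<forall>k\<in>{1..n}. \<exists>B lam. order_op 1 B \<and> T (k - 1) = dop_comp B (A k) + [:rconst lam:] \<and>
      T k = dop_comp (A k) B + [:rconst lam:]"
  proof
    fix k
    assume "k \<in> {1..n}"
    with A assms show "\<exists>B lam. order_op 1 B \<and> T (k - 1) = dop_comp B (A k) + [:rconst lam:] \<and>
        T k = dop_comp (A k) B + [:rconst lam:]"
      by (intro intertwining_imp_factorization) auto
  qed
  then obtain B lam where "\<forall>k\<in>{1..n}. order_op 1 (B k) \<and> T (k - 1) = dop_comp (B k) (A k) + [:rconst (lam k):] \<and>
      T k = dop_comp (A k) (B k) + [:rconst (lam k):]"
    by metis
  with A show "factorization_chain n T"
    unfolding factorization_chain_def by blast
next
  assume "factorization_chain n T"
  then show "rational_darboux_chain n T"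
    unfolding factorization_chain_def rational_darboux_chain_def
    using factorization_intertwines by metis
qed

end
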